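(* For every tree embedding $(\mathcal T,\mathcal M,y)$ in the support of $\mathcal D$, the set $Z_{\mathcal T}=\bigcup\{Z_F : F\subseteq E(H),\ |F|=\ell,\ \mathcal T\text{ is good for }F\}$ satisfies $|Z_{\mathcal T}|\le q\cdot n^{2\ell}\cdot 2^{2\ell\beta}$.
   Context: Standing setup. $G=(V,E)$ is an undirected graph with $n=|V|$, demand-pairs $(S_i,T_i)$, $i\in[q]$, of subsets of $V$. $\ell\ge1$ is an integer and $E_\ell\subseteq E$ an edge set such that in $(V,E_\ell)$ every $(S_i,T_i)$ is $\ell$-edge-connected. $x:E\to[0,1]$ satisfies $x_e=1$ for $e\in E_\ell$ and $\sum_{e\in\delta_G(X)}x_e\ge \ell+1$ for every $i\in[q]$ and every $X$ with $T_i\subseteq X\subseteq V\setminus S_i$. $\beta\ge1$ is a real. $\mathsf{LARGE}=\{e: x_e\ge 1/(4\ell\beta)\}$ and $H=(V,\mathsf{LARGE})$. Capacities: $\tilde x_e=1/(4\ell\beta)$ if $e\in\mathsf{LARGE}$; $\tilde x_e=0$ if $x_e<\frac{1}{2n^2}\cdot\frac1{4\ell\beta}$; $\tilde x_e=x_e$ otherwise. A tree embedding $(\mathcal T,\mathcal M,y)$ of $(G,\tilde x)$: $\mathcal T$ is a tree; $\mathcal M$ maps nodes of $\mathcal T$ to vertices of $G$ and is a bijection between leaves of $\mathcal T$ and $V$ (a vertex set of $G$ is identified with the corresponding leaf set); each tree edge $f=(u,v)$ is mapped to a path $\mathcal M(f)$ in $G$ between $\mathcal M(u)$ and $\mathcal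 M(v)$; $y(f)=\tilde x(\delta_G(X))$ where $(X,V\setminus X)$ is the leaf partition induced by $\mathcal T-f$. $\mathcal M^{-1}(e)=\{f: e\in\mathcal M(f)\}$, $\mathcal M^{-1}(F)=\bigcup_{e\in F}\mathcal M^{-1}(e)$. $\mathcal D$ is a probability distribution over tree embeddings of $(G,\tilde x)$ with $\mathbb{E}_{\mathcal T\sim\mathcal D}[\sum_{f\in\mathcal M^{-1}(e)}y(f)]\le\beta\,\tilde x_e$ for every $e\in E$, and for every tree in its support and all disjoint $A,B\subseteq V$, the maximum $A$–$B$ flow in $\mathcal T$ under $y$ is at least the maximum $A$–$B$ flow in $G$ under $\tilde x$. A tree embedding is good for $F\subseteq E(H)$ if $\sum_{f\in\mathcal M^{-1}(F)}y(f)\le1/2$. Components: $\mathbb Q^F$ is the set of vertex sets of connected components of $(V,E(H)\setminus F)$; for nonempty $S\subseteq V$, $Q_S$ is the union of those components meeting $S$. A component $Q\in\mathbb Q^F$ is shattered (w.r.t. $\mathcal T$) if its leaves are not all in one connected component of $\mathcal T$ with the edges $\mathcal M^{-1}(F)$ removed. $\mathbb U^F_{\mathcal T}$ is the set of all partitions $(A',B')$ (parts may be empty) of the set of shattered components, and $Z_F=\{(A'\cup Q_{S_i},\,B'\cup Q_{T_i}) : (A',B')\in\mathbb U^F_{\mathcal T},\ i\in[q],\ Q_{S_i}\cap Q_{T_i}=\emptyset\}$. *)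

theory Defs
  imports "HOL-Probability.Probability"
begin

definition is_graph :: "'v set \<Rightarrow> 'v set set \<Rightarrow> bool" where
  "is_graph V E \<longleftrightarrow> finite V \<and> (\<forall>e\<in>E. e \<subseteq> V \<and> card e = 2)"

definition cut :: "'v set set \<Rightarrow> 'v set \<Rightarrow> 'v set set" where
  "cut E X = {e \<in> E. card (e \<inter> X) = 1}"

definition edge_connected :: "nat \<Rightarrow> 'v set \<Rightarrow> 'v set set \<Rightarrow> 'v set \<Rightarrow> 'v set \<Rightarrow> bool" where
  "edge_connected k V F S T \<longleftrightarrow>
     (\<forall>X. T \<subseteq> X \<and> X \<subseteq> V - S \<longrightarrow> card (cut F X) \<ge> k)"

definition adj :: "'a set set \<Rightarrow> ('a \<times> 'a) set" where
  "adj R = {(a, b). {a, b} \<in> R}"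

definition comp :: "'v set \<Rightarrow> 'v set set \<Rightarrow> 'v \<Rightarrow> 'v set" where
  "comp V R v = {w \<in> V. (v, w) \<in> (adj R)\<^sup>*}"

definition comps :: "'v set \<Rightarrow> 'v set set \<Rightarrow> 'v set set" where
  "comps V R = {comp V R v | v. v \<in> V}"

definition QS :: "'v set \<Rightarrow> 'v set set \<Rightarrow> 'v set \<Rightarrow> 'v set" where
  "QS V R S = \<Union>{Q \<in> comps V R. Q \<inter> S \<noteq> {}}"

definition is_gpath :: "'v set \<Rightarrow> 'v set set \<Rightarrow> 'v list \<Rightarrow> bool" where
  "is_gpath V E p \<longleftrightarrow> p \<noteq> [] \<and> distinct p \<and> set p \<subseteq> V \<and>
     (\<forall>i. Suc i < length p \<longrightarrow> {p ! i, p ! Suc i} \<in> E)"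

definition path_edges :: "'v list \<Rightarrow> 'v set set" where
  "path_edges p = {{p ! i, p ! Suc i} | i. Suc i < length p}"

text \<open>An A-B flow in an undirected capacitated graph (Nd, Ed, c): g u v is the
  amount sent from u to v along edge {u,v}; on each edge the flow in both
  directions together respects the capacity; conservation holds outside A \<union> B.\<close>
definition is_flow :: "'a set \<Rightarrow> 'a set set \<Rightarrow> ('a set \<Rightarrow> real) \<Rightarrow> 'a set \<Rightarrow> 'a set
     \<Rightarrow> ('a \<Rightarrow> 'a \<Rightarrow> real) \<Rightarrow> bool" where
  "is_flow Nd Ed c A B g \<longleftrightarrow>
     (\<forall>u v. 0 \<le> g u v) \<and>
     (\<forall>u v. (u \<notin> Nd \<or> v \<notin> Nd \<or> u = v \<or> {u, v} \<notin> Ed) \<longrightarrow> g u v = 0) \<and>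
     (\<forall>u v. {u, v} \<in> Ed \<longrightarrow> g u v + g v u \<le> c {u, v}) \<and>
     (\<forall>w \<in> Nd - (A \<union> B). (\<Sum>v\<in>Nd. g w v) = (\<Sum>v\<in>Nd. g v w))"

definition flow_value :: "'a set \<Rightarrow> 'a set \<Rightarrow> ('a \<Rightarrow> 'a \<Rightarrow> real) \<Rightarrow> real" where
  "flow_value Nd A g = (\<Sum>a\<in>A \<inter> Nd. \<Sum>v\<in>Nd. g a v - g v a)"

definition max_flow :: "'a set \<Rightarrow> 'a set set \<Rightarrow> ('a set \<Rightarrow> real) \<Rightarrow> 'a set \<Rightarrow> 'a set \<Rightarrow> real" where
  "max_flow Nd Ed c A B = Sup (flow_value Nd A ` {g. is_flow Nd Ed c A B g})"

record ('n, 'v) tembed =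
  tnodes :: "'n set"
  tedges :: "'n set set"
  tmap   :: "'n \<Rightarrow> 'v"
  tpath  :: "'n set \<Rightarrow> 'v list"

text \<open>A (finite) tree: connected, and every edge is a bridge (minimally connected).\<close>
definition is_tree :: "'n set \<Rightarrow> 'n set set \<Rightarrow> bool" where
  "is_tree N TE \<longleftrightarrow> finite N \<and> N \<noteq> {} \<and> (\<forall>f\<in>TE. f \<subseteq> N \<and> card f = 2) \<and>
     (\<forall>u\<in>N. \<forall>w\<in>N. (u, w) \<in> (adj TE)\<^sup>*) \<and>
     (\<forall>f\<in>TE. \<exists>u w. f = {u, w} \<and> (u, w) \<notin> (adj (TE - {f}))\<^sup>*)"

definition tleaves :: "('n, 'v) tembed \<Rightarrow> 'n set" where
  "tleaves T = {u \<in> tnodes T. card {f \<in> tedges T. u \<in> f} \<le> 1}"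

definition is_tree_embedding :: "'v set \<Rightarrow> 'v set set \<Rightarrow> ('n, 'v) tembed \<Rightarrow> bool" where
  "is_tree_embedding V E T \<longleftrightarrow>
     is_tree (tnodes T) (tedges T) \<and>
     tmap T ` tnodes T \<subseteq> V \<and>
     bij_betw (tmap T) (tleaves T) V \<and>
     (\<forall>f\<in>tedges T. is_gpath V E (tpath T f) \<and>
        {hd (tpath T f), last (tpath T f)} = tmap T ` f)"

text \<open>The leaves on one side of the partition induced by removing the tree edge f.\<close>
definition tside :: "('n, 'v) tembed \<Rightarrow> 'n set \<Rightarrow> 'n set" where
  "tside T f = {w \<in> tleaves T. (SOME u. u \<in> f, w) \<in> (adj (tedges T - {f}))\<^sup>*}"

definition ty :: "'v set set \<Rightarrow> ('v set \<Rightarrow> real) \<Rightarrow> ('n, 'v) tembed \<Rightarrow> 'n set \<Rightarrow> real" where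
  "ty E c T f = sum c (cut E (tmap T ` tside T f))"

definition Minv :: "('n, 'v) tembed \<Rightarrow> 'v set set \<Rightarrow> 'n set set" where
  "Minv T F = {f \<in> tedges T. path_edges (tpath T f) \<inter> F \<noteq> {}}"

definition flow_dominating :: "'v set \<Rightarrow> 'v set set \<Rightarrow> ('v set \<Rightarrow> real) \<Rightarrow> ('n, 'v) tembed \<Rightarrow> bool" where
  "flow_dominating V E c T \<longleftrightarrow>
     (\<forall>A B. A \<subseteq> V \<longrightarrow> B \<subseteq> V \<longrightarrow> A \<inter> B = {} \<longrightarrow>
        max_flow (tnodes T) (tedges T) (ty E c T)
          {w \<in> tleaves T. tmap T w \<in> A} {w \<in> tleaves T. tmap T w \<in> B}
        \<ge> max_flow V E c A B)"

definition good :: "'v set set \<Rightarrow> ('v set \<Rightarrow> real) \<Rightarrow> ('n, 'v) tembed \<Rightarrow> 'v set set \<Rightarrow> bool" where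
  "good E c T F \<longleftrightarrow> (\<Sum>f\<in>Minv T F. ty E c T f) \<le> 1 / 2"

definition LARGE :: "'v set set \<Rightarrow> ('v set \<Rightarrow> real) \<Rightarrow> nat \<Rightarrow> real \<Rightarrow> 'v set set" where
  "LARGE E x l \<beta> = {e \<in> E. x e \<ge> 1 / (4 * real l * \<beta>)}"

definition xtilde :: "nat \<Rightarrow> ('v set \<Rightarrow> real) \<Rightarrow> nat \<Rightarrow> real \<Rightarrow> 'v set \<Rightarrow> real" where
  "xtilde n x l \<beta> e =
     (if x e \<ge> 1 / (4 * real l * \<beta>) then 1 / (4 * real l * \<beta>)
      else if x e < 1 / (2 * real n ^ 2) * (1 / (4 * real l * \<beta>)) then 0
      else x e)"

definition shattered :: "'v set \<Rightarrow> 'v set set \<Rightarrow> ('n, 'v) tembed \<Rightarrow> 'v set set \<Rightarrow> 'v set set" where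
  "shattered V EH T F = {Q \<in> comps V (EH - F).
     \<not> (\<exists>u \<in> tnodes T. \<forall>w \<in> {w \<in> tleaves T. tmap T w \<in> Q}.
            (u, w) \<in> (adj (tedges T - Minv T F))\<^sup>*)}"

definition ZF :: "'v set \<Rightarrow> 'v set set \<Rightarrow> nat \<Rightarrow> (nat \<Rightarrow> 'v set) \<Rightarrow> (nat \<Rightarrow> 'v set)
     \<Rightarrow> ('n, 'v) tembed \<Rightarrow> 'v set set \<Rightarrow> ('v set \<times> 'v set) set" where
  "ZF V EH q S Tg T F =
     {(\<Union>A' \<union> QS V (EH - F) (S i), \<Union>B' \<union> QS V (EH - F) (Tg i)) | A' B' i.
        A' \<union> B' = shattered V EH T F \<and> A' \<inter> B' = {} \<and> i \<in> {1..q} \<and>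
        QS V (EH - F) (S i) \<inter> QS V (EH - F) (Tg i) = {}}"

end

theory Submission
  imports Defs
begin

text \<open>If a component Q of (V, E(H) - F) is shattered, the tree edges M^-1(F) separate two
  leaves of Q; in a forest some single edge f of M^-1(F) then already separates them, and as
  Q is connected in H - F, some LARGE edge e inside Q crosses the leaf cut of f. Distinct
  components give distinct pairs (f, e), and every such e contributes 1/(4 l \<beta>) to y(f), so
  goodness of T for F leaves room for at most 2 l \<beta> shattered components. Hence
  |Z_F| \<le> q 2^(2 l \<beta>), and there are at most |E(H)|^l \<le> n^(2 l) sets F.\<close>

lemma sym_adj: "sym (adj R)"
  by (auto simp: adj_def sym_def insert_commute)

lemma adj_rtrancl_sym: "(a, b) \<in> (adj R)\<^sup>* \<Longrightarrow> (b, a) \<in> (adj R)\<^sup>*"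
  using sym_rtrancl[OF sym_adj] by (rule symD)

lemma adj_rtrancl_mono:
  assumes "R \<subseteq> R'" and "(a, b) \<in> (adj R)\<^sup>*"
  shows "(a, b) \<in> (adj R')\<^sup>*"
proof -
  have "adj R \<subseteq> adj R'" using assms(1) by (auto simp: adj_def)
  then show ?thesis using assms(2) rtrancl_mono by blast
qed

lemma adj_rtrancl_Diff_edge:
  assumes "(a, z) \<in> (adj R)\<^sup>*"
  shows "(a, z) \<in> (adj (R - {{u, v}}))\<^sup>* \<or>
    (((a, u) \<in> (adj (R - {{u, v}}))\<^sup>* \<or> (a, v) \<in> (adj (R - {{u, v}}))\<^sup>*) \<and>
     ((u, z) \<in> (adj (R - {{u, v}}))\<^sup>* \<or> (v, z) \<in> (adj (R - {{u, v}}))\<^sup>*))"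
  using assms
proof (induction rule: rtrancl_induct)
  case (step y z)
  show ?case
  proof (cases "{y, z} = {u, v}")
    case True
    then have "y \<in> {u, v}" "z \<in> {u, v}" by auto
    then show ?thesis using step.IH by auto
  next
    case False
    then have "(y, z) \<in> adj (R - {{u, v}})" using step.hyps(2) by (auto simp: adj_def)
    then show ?thesis using step.IH by (meson rtrancl.rtrancl_into_rtrancl)
  qed
qed simp

lemma adj_rtrancl_bridge_cases:
  assumes "(a, b) \<in> (adj R)\<^sup>*" and "(a, b) \<notin> (adj (R - {{u, v}}))\<^sup>*"
  shows "(a, u) \<in> (adj (R - {{u, v}}))\<^sup>* \<and> (v, b) \<in> (adj (R - {{u, v}}))\<^sup>* \<or>
         (a, v) \<in> (adj (R - {{u, v}}))\<^sup>* \<and> (u, b) \<in> (adj (R - {{u, v}}))\<^sup>*"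
  using adj_rtrancl_Diff_edge[OF assms(1), of u v] assms(2) by (meson rtrancl_trans)

lemma adj_rtrancl_crossing_edge:
  assumes "(p, r) \<in> (adj R)\<^sup>*" and "p \<in> X" and "r \<notin> X"
  shows "\<exists>a b. {a, b} \<in> R \<and> a \<in> X \<and> b \<notin> X \<and> (p, a) \<in> (adj R)\<^sup>*"
  using assms
proof (induction rule: rtrancl_induct)
  case (step y z)
  then show ?case by (cases "y \<in> X") (auto simp: adj_def)
qed simp

definition is_forest :: "'a set set \<Rightarrow> bool" where
  "is_forest R \<longleftrightarrow> (\<forall>g\<in>R. \<exists>u w. g = {u, w} \<and> (u, w) \<notin> (adj (R - {g}))\<^sup>*)"

lemma is_forest_Diff:
  assumes "is_forest R"
  shows "is_forest (R - M)"
  unfolding is_forest_def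
proof
  fix g assume "g \<in> R - M"
  then obtain u w where g: "g = {u, w}" and "(u, w) \<notin> (adj (R - {g}))\<^sup>*"
    using assms unfolding is_forest_def by (meson DiffD1)
  moreover have "R - M - {g} \<subseteq> R - {g}" by blast
  ultimately have "(u, w) \<notin> (adj (R - M - {g}))\<^sup>*" using adj_rtrancl_mono by metis
  with g show "\<exists>u w. g = {u, w} \<and> (u, w) \<notin> (adj (R - M - {g}))\<^sup>*" by metis
qed

lemma is_forest_connected_Diff2:
  assumes forest: "is_forest R"
    and af: "(a, b) \<in> (adj (R - {f}))\<^sup>*" and ag: "(a, b) \<in> (adj (R - {g}))\<^sup>*"
  shows "(a, b) \<in> (adj (R - {f} - {g}))\<^sup>*"
proof (rule ccontr)
  define S where "S = (adj (R - {f} - {g}))\<^sup>*"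
  define K where "K = (adj (R - {f}))\<^sup>*"
  assume "(a, b) \<notin> (adj (R - {f} - {g}))\<^sup>*"
  then have ab: "(a, b) \<notin> S" unfolding S_def .
  have "f \<in> R"
  proof (rule ccontr)
    assume "f \<notin> R"
    then have "R - {f} - {g} = R - {g}" by blast
    then show False using ag ab unfolding S_def by simp
  qed
  have "g \<in> R - {f}"
  proof (rule ccontr)
    assume "g \<notin> R - {f}"
    then have "R - {f} - {g} = R - {f}" by blast
    then show False using af ab unfolding S_def by simp
  qed
  obtain c d where f: "f = {c, d}" "(c, d) \<notin> K"
    using forest \<open>f \<in> R\<close> unfolding is_forest_def K_def by meson
  obtain u v where g: "g = {u, v}"
    using forest \<open>g \<in> R - {f}\<close> unfolding is_forest_def by (meson DiffD1)
  have "R - {f} - {{u, v}} = R - {f} - {g}" "R - {g} - {{c, d}} = R - {f} - {g}"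
    using f g by auto
  note g_cases = adj_rtrancl_bridge_cases[OF af, of u v, unfolded this(1), folded S_def]
   and f_cases = adj_rtrancl_bridge_cases[OF ag, of c d, unfolded this(2), folded S_def]
  have S_K: "S \<subseteq> K"
    unfolding S_def K_def using adj_rtrancl_mono[of "R - {f} - {g}" "R - {f}"] by auto
  have "(u, v) \<in> adj (R - {f})" using g \<open>g \<in> R - {f}\<close> by (simp add: adj_def)
  then have uv: "(u, v) \<in> K" "(v, u) \<in> K" unfolding K_def by (auto intro: adj_rtrancl_sym)
  have dc: "(d, c) \<notin> K" using f(2) adj_rtrancl_sym[of d c] unfolding K_def by blast
  \<comment> \<open>Removing g separates a from b in R - f, and removing f separates them in R - g,
    so both edges lie on the unique a-b path; following it joins c to d avoiding f.\<close>
  have S_sym: "(p, r) \<in> S \<Longrightarrow> (r, p) \<in> S" for p r unfolding S_def by (rule adj_rtrancl_sym)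
  have S_trans: "(p, r) \<in> S \<Longrightarrow> (r, t) \<in> S \<Longrightarrow> (p, t) \<in> S" for p r t
    unfolding S_def by (rule rtrancl_trans)
  obtain x y where "(a, x) \<in> S" "(y, b) \<in> S" "(x, y) \<in> K"
    using g_cases ab uv by blast
  moreover obtain c' d' where "(a, c') \<in> S" "(d', b) \<in> S" "(c', d') \<notin> K"
    using f_cases ab f(2) dc by blast
  ultimately have "(c', x) \<in> S" "(x, y) \<in> K" "(y, d') \<in> S"
    using S_sym S_trans by meson+
  then have "(c', x) \<in> K" "(x, y) \<in> K" "(y, d') \<in> K" using S_K by auto
  then show False using \<open>(c', d') \<notin> K\<close> unfolding K_def by (meson rtrancl_trans)
qed

lemma is_forest_disconnecting_edge:
  assumes "finite M" and "is_forest R"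
    and "(a, b) \<in> (adj R)\<^sup>*" and "(a, b) \<notin> (adj (R - M))\<^sup>*"
  shows "\<exists>f\<in>M. (a, b) \<notin> (adj (R - {f}))\<^sup>*"
  using assms
proof (induction M arbitrary: R rule: finite_induct)
  case (insert f M R)
  show ?case
  proof (cases "(a, b) \<in> (adj (R - {f}))\<^sup>*")
    case True
    have "R - insert f M = R - {f} - M" by auto
    then obtain g where "g \<in> M" "(a, b) \<notin> (adj (R - {f} - {g}))\<^sup>*"
      using insert.IH[OF is_forest_Diff[OF insert.prems(1)] True] insert.prems(3) by auto
    then show ?thesis using is_forest_connected_Diff2[OF insert.prems(1) True] by blast
  qed blast
qed simp

lemma comps_eqI:
  assumes "Q1 \<in> comps V R" "Q2 \<in> comps V R" "z \<in> Q1" "z \<in> Q2"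
  shows "Q1 = Q2"
proof -
  obtain v1 v2 where v: "Q1 = comp V R v1" "Q2 = comp V R v2"
    using assms(1,2) unfolding comps_def by blast
  then have "(v1, z) \<in> (adj R)\<^sup>*" "(v2, z) \<in> (adj R)\<^sup>*"
    using assms(3,4) unfolding comp_def by blast+
  then have "(v1, v2) \<in> (adj R)\<^sup>*" "(v2, v1) \<in> (adj R)\<^sup>*"
    by (meson adj_rtrancl_sym rtrancl_trans)+
  then show ?thesis unfolding v comp_def by (auto intro: rtrancl_trans)
qed

lemma comps_crossing_edge:
  assumes Q: "Q \<in> comps V R" and RV: "\<forall>e\<in>R. e \<subseteq> V"
    and "v0 \<in> Q" "v1 \<in> Q" and "(v0 \<in> X) \<noteq> (v1 \<in> X)"
  shows "\<exists>e\<in>R. e \<subseteq> Q \<and> card (e \<inter> X) = 1"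
proof -
  obtain v where v: "Q = comp V R v" using Q unfolding comps_def by blast
  obtain p r where p: "p \<in> Q" "p \<in> X" and r: "r \<in> Q" "r \<notin> X"
    using assms(3-5) by blast
  have "(v, p) \<in> (adj R)\<^sup>*" "(v, r) \<in> (adj R)\<^sup>*" using p r v unfolding comp_def by blast+
  then have vp: "(v, p) \<in> (adj R)\<^sup>*" and "(p, r) \<in> (adj R)\<^sup>*"
    by (meson adj_rtrancl_sym rtrancl_trans)+
  then obtain a b where ab: "{a, b} \<in> R" "a \<in> X" "b \<notin> X" "(p, a) \<in> (adj R)\<^sup>*"
    using adj_rtrancl_crossing_edge p(2) r(2) by metis
  then have "(v, a) \<in> (adj R)\<^sup>*" using vp by (meson rtrancl_trans)
  moreover have "(a, b) \<in> adj R" using ab(1) by (simp add: adj_def)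
  ultimately have "(v, a) \<in> (adj R)\<^sup>*" "(v, b) \<in> (adj R)\<^sup>*" by auto
  moreover have "{a, b} \<subseteq> V" using RV ab(1) by blast
  ultimately have "{a, b} \<subseteq> Q" using v unfolding comp_def by blast
  moreover have "{a, b} \<inter> X = {a}" using ab by auto
  ultimately show ?thesis using ab(1) by (intro bexI[of _ "{a, b}"]) auto
qed

lemma tree_separating_edge:
  assumes emb: "is_tree_embedding V E T" and "finite M"
    and w: "w0 \<in> tleaves T" "w1 \<in> tleaves T"
    and disconnected: "(w0, w1) \<notin> (adj (tedges T - M))\<^sup>*"
  shows "\<exists>f\<in>M. f \<in> tedges T \<and> (w0 \<in> tside T f) \<noteq> (w1 \<in> tside T f)"
proof -
  let ?TE = "tedges T"
  have tree: "is_tree (tnodes T) ?TE" using emb unfolding is_tree_embedding_def by blast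
  then have forest: "is_forest ?TE" unfolding is_tree_def is_forest_def by blast
  have conn: "(u, w) \<in> (adj ?TE)\<^sup>*" if "u \<in> tnodes T" "w \<in> tnodes T" for u w
    using tree that unfolding is_tree_def by blast
  have w_nodes: "w0 \<in> tnodes T" "w1 \<in> tnodes T" using w unfolding tleaves_def by auto
  obtain f where "f \<in> M" and nf: "(w0, w1) \<notin> (adj (?TE - {f}))\<^sup>*"
    using is_forest_disconnecting_edge[OF assms(2) forest conn[OF w_nodes] disconnected] by blast
  then have fT: "f \<in> ?TE" using conn[OF w_nodes] by (metis Diff_empty Diff_insert0)
  define P where "P = (adj (?TE - {f}))\<^sup>*"
  obtain a b where fab: "f = {a, b}" and ab: "(a, b) \<notin> P"
    using forest fT unfolding is_forest_def P_def by blast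
  have "a \<in> tnodes T" using tree fT fab unfolding is_tree_def by blast
  then have side: "(a, z) \<in> P \<or> (b, z) \<in> P" if "z \<in> tnodes T" for z
    using adj_rtrancl_Diff_edge[OF conn[OF _ that], of a a b] unfolding fab[symmetric] P_def
    by blast
  have "P = P\<inverse>" "P O P \<subseteq> P"
    unfolding P_def using sym_rtrancl[OF sym_adj] by (auto simp: sym_conv_converse_eq)
  then have "((s, w0) \<in> P) \<noteq> ((s, w1) \<in> P)" if "s \<in> {a, b}" for s
    using side[OF w_nodes(1)] side[OF w_nodes(2)] nf ab that unfolding P_def[symmetric]
    by (auto 4 3)
  moreover have "(SOME u. u \<in> f) \<in> {a, b}" using fab by (metis insertI1 someI)
  ultimately show ?thesis using \<open>f \<in> M\<close> fT w unfolding tside_def P_def by auto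
qed

lemma is_graph_finite_edges: "is_graph V E \<Longrightarrow> finite E"
  unfolding is_graph_def by (meson Pow_iff finite_Pow_iff finite_subset subsetI)

lemma finite_Minv:
  assumes "is_tree_embedding V E T"
  shows "finite (Minv T F)"
proof -
  have "tedges T \<subseteq> Pow (tnodes T)" "finite (tnodes T)"
    using assms unfolding is_tree_embedding_def is_tree_def by auto
  then have "finite (tedges T)" by (meson finite_Pow_iff finite_subset)
  then show ?thesis unfolding Minv_def by simp
qed

lemma shattered_crossing_edge:
  assumes emb: "is_tree_embedding V E T" and graph: "is_graph V E" and RE: "R \<subseteq> E"
    and Q: "Q \<in> shattered V R T F"
  shows "\<exists>f\<in>Minv T F. \<exists>e \<in> cut E (tmap T ` tside T f) \<inter> R. e \<subseteq> Q \<and> e \<noteq> {}"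
proof -
  have bij: "bij_betw (tmap T) (tleaves T) V" using emb unfolding is_tree_embedding_def by blast
  have Qc: "Q \<in> comps V (R - F)" using Q unfolding shattered_def by blast
  then obtain v where "v \<in> V" "Q = comp V (R - F) v" unfolding comps_def by blast
  then have "v \<in> Q" unfolding comp_def by simp
  obtain w0 where w0: "w0 \<in> tleaves T" "tmap T w0 = v"
    using bij \<open>v \<in> V\<close> by (metis bij_betw_iff_bijections)
  then have "w0 \<in> tnodes T" unfolding tleaves_def by blast
  then obtain w1 where w1: "w1 \<in> tleaves T" "tmap T w1 \<in> Q"
    and "(w0, w1) \<notin> (adj (tedges T - Minv T F))\<^sup>*"
    using Q unfolding shattered_def by auto
  then obtain f where f: "f \<in> Minv T F" and sep: "(w0 \<in> tside T f) \<noteq> (w1 \<in> tside T f)"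
    using tree_separating_edge[OF emb finite_Minv[OF emb] w0(1) w1(1)] by blast
  define X where "X = tmap T ` tside T f"
  have inj: "inj_on (tmap T) (tleaves T)" using bij by (rule bij_betw_imp_inj_on)
  have "tside T f \<subseteq> tleaves T" unfolding tside_def by auto
  then have "(tmap T w \<in> X) = (w \<in> tside T f)" if "w \<in> tleaves T" for w
    unfolding X_def using inj_on_image_mem_iff[OF inj that] by blast
  then have "(v \<in> X) \<noteq> (tmap T w1 \<in> X)" using sep w0 w1(1) by metis
  moreover have "\<forall>e\<in>R - F. e \<subseteq> V" using RE graph unfolding is_graph_def by blast
  ultimately obtain e where e: "e \<in> R - F" "e \<subseteq> Q" "card (e \<inter> X) = 1"
    using comps_crossing_edge[OF Qc _ \<open>v \<in> Q\<close> w1(2)] by blast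
  then have "e \<noteq> {}" "e \<in> cut E X" using RE unfolding cut_def by auto
  then show ?thesis using f e unfolding X_def by blast
qed

lemma card_shattered_le:
  assumes emb: "is_tree_embedding V E T" and graph: "is_graph V E" and RE: "R \<subseteq> E"
  shows "card (shattered V R T F) \<le> (\<Sum>f\<in>Minv T F. card (cut E (tmap T ` tside T f) \<inter> R))"
proof -
  let ?sh = "shattered V R T F" and ?P = "Sigma (Minv T F) (\<lambda>f. cut E (tmap T ` tside T f) \<inter> R)"
  have "finite E" using graph by (rule is_graph_finite_edges)
  then have fin: "finite ?P" using finite_Minv[OF emb] by (simp add: cut_def)
  have "\<forall>Q\<in>?sh. \<exists>p. p \<in> ?P \<and> snd p \<subseteq> Q \<and> snd p \<noteq> {}"
  proof
    fix Q assume "Q \<in> ?sh"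
    then obtain f e where "f \<in> Minv T F" "e \<in> cut E (tmap T ` tside T f) \<inter> R" "e \<subseteq> Q" "e \<noteq> {}"
      using shattered_crossing_edge[OF emb graph RE \<open>Q \<in> ?sh\<close>] by blast
    then show "\<exists>p. p \<in> ?P \<and> snd p \<subseteq> Q \<and> snd p \<noteq> {}" by (intro exI[of _ "(f, e)"]) simp
  qed
  from bchoice[OF this] obtain h
    where h: "\<forall>Q\<in>?sh. h Q \<in> ?P \<and> snd (h Q) \<subseteq> Q \<and> snd (h Q) \<noteq> {}" ..
  have "inj_on h ?sh"
  proof (rule inj_onI)
    fix Q1 Q2 assume Q: "Q1 \<in> ?sh" "Q2 \<in> ?sh" and "h Q1 = h Q2"
    moreover obtain z where "z \<in> snd (h Q1)" using h Q(1) by blast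
    ultimately have "z \<in> Q1" "z \<in> Q2" using h Q by (metis subsetD)+
    then show "Q1 = Q2" using comps_eqI[of Q1 V "R - F" Q2 z] Q unfolding shattered_def by blast
  qed
  moreover have "h ` ?sh \<subseteq> ?P" using h by (auto simp del: mem_Sigma_iff)
  ultimately have "card ?sh \<le> card ?P" using fin by (rule card_inj_on_le)
  also have "\<dots> = (\<Sum>f\<in>Minv T F. card (cut E (tmap T ` tside T f) \<inter> R))"
    using \<open>finite E\<close> finite_Minv[OF emb] by (simp add: card_SigmaI cut_def)
  finally show ?thesis .
qed

lemma card_ZF_le:
  assumes "finite V"
  shows "card (ZF V R q S Tg T F) \<le> 2 ^ card (shattered V R T F) * q"
proof -
  let ?sh = "shattered V R T F"
  have "?sh \<subseteq> Pow V" unfolding shattered_def comps_def comp_def by blast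
  then have fin: "finite ?sh" using assms by (meson finite_Pow_iff finite_subset)
  define g where "g = (\<lambda>(A', i). (\<Union>A' \<union> QS V (R - F) (S i), \<Union>(?sh - A') \<union> QS V (R - F) (Tg i)))"
  have "ZF V R q S Tg T F \<subseteq> g ` (Pow ?sh \<times> {1..q})"
  proof
    fix z assume "z \<in> ZF V R q S Tg T F"
    then obtain A' B' i where z: "z = (\<Union>A' \<union> QS V (R - F) (S i), \<Union>B' \<union> QS V (R - F) (Tg i))"
      and AB: "A' \<union> B' = ?sh" "A' \<inter> B' = {}" and i: "i \<in> {1..q}"
      unfolding ZF_def by blast
    moreover have "B' = ?sh - A'" using AB by blast
    ultimately have "z = g (A', i)" unfolding g_def by simp
    with AB i show "z \<in> g ` (Pow ?sh \<times> {1..q})" by blast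
  qed
  then have "card (ZF V R q S Tg T F) \<le> card (g ` (Pow ?sh \<times> {1..q}))"
    by (rule card_mono[rotated]) (simp add: fin)
  also have "\<dots> \<le> card (Pow ?sh \<times> {1..q})" by (rule card_image_le) (simp add: fin)
  also have "\<dots> = 2 ^ card ?sh * q" by (simp add: card_cartesian_product card_Pow fin)
  finally show ?thesis .
qed

lemma good_card_shattered_le:
  fixes c :: "'v set \<Rightarrow> real"
  assumes emb: "is_tree_embedding V E T" and graph: "is_graph V E" and RE: "R \<subseteq> E"
    and c_nonneg: "\<forall>e\<in>E. 0 \<le> c e" and c_R: "\<forall>e\<in>R. c e = \<delta>" and "\<delta> > 0"
    and "good E c T F"
  shows "real (card (shattered V R T F)) \<le> 1 / (2 * \<delta>)"
proof -
  let ?B = "\<lambda>f. cut E (tmap T ` tside T f) \<inter> R"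
  have "real (card (shattered V R T F)) \<le> (\<Sum>f\<in>Minv T F. real (card (?B f)))"
    using card_shattered_le[OF emb graph RE] by (metis of_nat_le_iff of_nat_sum)
  then have "real (card (shattered V R T F)) * \<delta> \<le> (\<Sum>f\<in>Minv T F. real (card (?B f)) * \<delta>)"
    using \<open>\<delta> > 0\<close> by (simp add: mult_right_mono flip: sum_distrib_right)
  also have "\<dots> \<le> (\<Sum>f\<in>Minv T F. ty E c T f)"
  proof (rule sum_mono)
    fix f
    have "real (card (?B f)) * \<delta> = (\<Sum>e\<in>?B f. c e)" using c_R by simp
    also have "\<dots> \<le> ty E c T f" unfolding ty_def
      by (rule sum_mono2) (auto simp: cut_def is_graph_finite_edges[OF graph] c_nonneg)
    finally show "real (card (?B f)) * \<delta> \<le> ty E c T f" .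
  qed
  also have "\<dots> \<le> 1 / 2" using \<open>good E c T F\<close> unfolding good_def .
  finally show ?thesis using \<open>\<delta> > 0\<close> by (simp add: field_simps)
qed

lemma card_ZF_good_le:
  fixes c :: "'v set \<Rightarrow> real"
  assumes emb: "is_tree_embedding V E T" and graph: "is_graph V E" and RE: "R \<subseteq> E"
    and c_nonneg: "\<forall>e\<in>E. 0 \<le> c e" and c_R: "\<forall>e\<in>R. c e = \<delta>" and "\<delta> > 0"
    and "good E c T F"
  shows "real (card (ZF V R q S Tg T F)) \<le> real q * 2 powr (1 / (2 * \<delta>))"
proof -
  let ?sh = "shattered V R T F"
  have "finite V" using graph unfolding is_graph_def by blast
  then have "real (card (ZF V R q S Tg T F)) \<le> real (2 ^ card ?sh * q)"
    using card_ZF_le[of V R q S Tg T F] by (simp only: of_nat_le_iff)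
  also have "\<dots> = 2 powr real (card ?sh) * real q" by (simp add: powr_realpow)
  also have "\<dots> \<le> 2 powr (1 / (2 * \<delta>)) * real q"
    using good_card_shattered_le[OF assms] by (intro mult_right_mono powr_mono) simp_all
  finally show ?thesis by (simp add: mult.commute)
qed

lemma card_graph_edges_le:
  assumes "is_graph V E"
  shows "card E \<le> card V ^ 2"
proof -
  have fin: "finite V" and "E \<subseteq> {B. B \<subseteq> V \<and> card B = 2}"
    using assms unfolding is_graph_def by auto
  then have "card E \<le> card {B. B \<subseteq> V \<and> card B = 2}" by (intro card_mono) simp_all
  also have "\<dots> = card V choose 2" using fin by (rule n_subsets)
  also have "\<dots> \<le> card V ^ 2"
    by (cases "2 \<le> card V") (simp_all add: binomial_le_pow binomial_eq_0)
  finally show ?thesis .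
qed

lemma card_subsets_card_le:
  assumes "finite L" and "card L \<le> m"
  shows "card {F. F \<subseteq> L \<and> card F = k} \<le> m ^ k"
proof (cases "k \<le> card L")
  case True
  then have "card L choose k \<le> card L ^ k" by (rule binomial_le_pow)
  also have "\<dots> \<le> m ^ k" using assms(2) by (rule power_mono) simp
  finally show ?thesis using n_subsets[OF assms(1)] by simp
qed (simp add: n_subsets[OF assms(1)] binomial_eq_0)

lemma card_edge_subsets_le:
  assumes "is_graph V E" and "L \<subseteq> E"
  shows "card {F. F \<subseteq> L \<and> card F = k} \<le> card V ^ (2 * k)"
proof -
  have "finite L" using is_graph_finite_edges[OF assms(1)] assms(2) by (rule finite_subset[rotated])
  moreover have "card L \<le> card V ^ 2"
    using card_mono[OF is_graph_finite_edges[OF assms(1)] assms(2)] card_graph_edges_le[OF assms(1)]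
    by (rule le_trans)
  ultimately show ?thesis by (simp add: card_subsets_card_le power_mult)
qed

lemma card_UN_le_uniform:
  assumes "finite A" and "\<And>a. a \<in> A \<Longrightarrow> real (card (B a)) \<le> k"
  shows "real (card (\<Union>a\<in>A. B a)) \<le> real (card A) * k"
proof -
  have "real (card (\<Union>a\<in>A. B a)) \<le> (\<Sum>a\<in>A. real (card (B a)))"
    using card_UN_le[OF assms(1)] by (metis of_nat_le_iff of_nat_sum)
  also have "\<dots> \<le> real (card A) * k" using assms(2) by (rule sum_bounded_above)
  finally show ?thesis .
qed

theorem lemma5p10:
  fixes V :: "'v set" and E :: "'v set set" and q :: nat
    and S Tg :: "nat \<Rightarrow> 'v set" and l :: nat and El :: "'v set set"
    and x :: "'v set \<Rightarrow> real" and \<beta> :: real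
    and D :: "('n, 'v) tembed pmf" and T :: "('n, 'v) tembed"
  assumes graph: "is_graph V E"
    and ST: "\<forall>i\<in>{1..q}. S i \<subseteq> V \<and> Tg i \<subseteq> V"
    and l_pos: "l \<ge> 1"
    and El: "El \<subseteq> E" "\<forall>i\<in>{1..q}. edge_connected l V El (S i) (Tg i)"
    and x_range: "\<forall>e\<in>E. 0 \<le> x e \<and> x e \<le> 1"
    and x_El: "\<forall>e\<in>El. x e = 1"
    and x_cut: "\<forall>i\<in>{1..q}. \<forall>X. Tg i \<subseteq> X \<and> X \<subseteq> V - S i \<longrightarrow>
                  (\<Sum>e\<in>cut E X. x e) \<ge> real l + 1"
    and beta: "\<beta> \<ge> 1"
    and D_emb: "\<forall>T'\<in>set_pmf D. is_tree_embedding V E T'"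
    and D_load: "\<forall>e\<in>E. (\<integral>\<^sup>+ T'. ennreal (\<Sum>f\<in>Minv T' {e}. ty E (xtilde (card V) x l \<beta>) T' f) \<partial>measure_pmf D)
                   \<le> ennreal (\<beta> * xtilde (card V) x l \<beta> e)"
    and D_flow: "\<forall>T'\<in>set_pmf D. flow_dominating V E (xtilde (card V) x l \<beta>) T'"
    and T_supp: "T \<in> set_pmf D"
  shows "real (card (\<Union>{ZF V (LARGE E x l \<beta>) q S Tg T F | F.
                 F \<subseteq> LARGE E x l \<beta> \<and> card F = l \<and> good E (xtilde (card V) x l \<beta>) T F}))
         \<le> real q * real (card V) ^ (2 * l) * 2 powr (2 * real l * \<beta>)"
proof -
  let ?L = "LARGE E x l \<beta>" and ?c = "xtilde (card V) x l \<beta>" and ?\<delta> = "1 / (4 * real l * \<beta>)"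
  let ?P = "2 powr (2 * real l * \<beta>)"
  define Fs where "Fs = {F. F \<subseteq> ?L \<and> card F = l \<and> good E ?c T F}"
  have emb: "is_tree_embedding V E T" using D_emb T_supp by blast
  have LE: "?L \<subseteq> E" unfolding LARGE_def by blast
  have "?\<delta> > 0" using l_pos beta by simp
  moreover have "\<forall>e\<in>E. 0 \<le> ?c e" "\<forall>e\<in>?L. ?c e = ?\<delta>"
    using x_range \<open>?\<delta> > 0\<close> unfolding xtilde_def LARGE_def by auto
  ultimately have card_Z: "real (card (ZF V ?L q S Tg T F)) \<le> real q * ?P" if "F \<in> Fs" for F
    using card_ZF_good_le[OF emb graph LE, of ?c ?\<delta> F q S Tg] that
    unfolding Fs_def by (simp add: mult_ac)
  have "Fs \<subseteq> {F. F \<subseteq> ?L \<and> card F = l}" unfolding Fs_def by blast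
  moreover have "finite {F. F \<subseteq> ?L \<and> card F = l}"
    using finite_subset[OF LE is_graph_finite_edges[OF graph]] by simp
  ultimately have "finite Fs" and "card Fs \<le> card V ^ (2 * l)"
    using card_edge_subsets_le[OF graph LE, of l] by (auto intro: finite_subset card_mono le_trans)
  have "real (card (\<Union>F\<in>Fs. ZF V ?L q S Tg T F)) \<le> real (card Fs) * (real q * ?P)"
    using \<open>finite Fs\<close> card_Z by (rule card_UN_le_uniform)
  also have "\<dots> \<le> real (card V ^ (2 * l)) * (real q * ?P)"
    using \<open>card Fs \<le> card V ^ (2 * l)\<close> by (intro mult_right_mono) simp_all
  finally show ?thesis by (simp add: Fs_def setcompr_eq_image mult_ac)
qed

end
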